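(* Let $a(z),b(z)\in\mathbb{C}[z,z^{-1}]$, $k\in\mathbb{Z}$, and $\sigma,\tau\in\{-1,1\}$, and let \[ I=\frac{1}{2}\left\|\left(a+\sigma z^k\overline{\widetilde{a}}\right)\left(b+\tau z^k\overline{\widetilde{b}}\right)\right\|_2^2+\frac{1}{2}\left\|\left(\widetilde{a}-\sigma z^k\overline{a}\right)\left(\widetilde{b}-\tau z^k\overline{b}\right)\right\|_2^2. \] Then \[ I=2\|ab\|_2^2+2\|a\widetilde{b}\|_2^2+2\sigma\tau\operatorname{Re}\int a\widetilde{a}\,\overline{b\widetilde{b}}+2\sigma\tau\operatorname{Re}\int z^{-2k}a\widetilde{a}b\widetilde{b}. \]
   Context: For a Laurent polynomial $a(z)=\sum_ja_jz^j\in\mathbb{C}[z,z^{-1}]$: $\widetilde{a}(z)=a(-z)$; $\overline{a}=\overline{a(z)}=\sum_j\overline{a_j}z^{-j}$ (its conjugate on the complex unit circle); $\int a$ denotes the constant coefficient $a_0=\frac{1}{2\pi}\int_0^{2\pi}a(e^{i\theta})d\theta$; and $\|a\|_2^2=\frac{1}{2\pi}\int_0^{2\pi}|a(e^{i\theta})|^2d\theta=\sum_j|a_j|^2$. *)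

theory Defs
  imports Complex_Main
begin

text \<open>Laurent polynomials in C[z,z^-1] are represented by their coefficient
  functions int => complex with finite support (predicate lpoly).\<close>

definition lpoly :: "(int \<Rightarrow> complex) \<Rightarrow> bool" where
  "lpoly a \<longleftrightarrow> finite {j. a j \<noteq> 0}"

definition lmul :: "(int \<Rightarrow> complex) \<Rightarrow> (int \<Rightarrow> complex) \<Rightarrow> (int \<Rightarrow> complex)" where
  "lmul a b = (\<lambda>n. \<Sum>j\<in>{j. a j \<noteq> 0}. a j * b (n - j))"

definition lmono :: "int \<Rightarrow> (int \<Rightarrow> complex)" where
  "lmono k = (\<lambda>j. if j = k then 1 else 0)"

text \<open>tilde a (z) = a(-z)\<close>
definition ltilde :: "(int \<Rightarrow> complex) \<Rightarrow> (int \<Rightarrow> complex)" where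
  "ltilde a = (\<lambda>j. ((-1::complex) powi j) * a j)"

definition lbar :: "(int \<Rightarrow> complex) \<Rightarrow> (int \<Rightarrow> complex)" where
  "lbar a = (\<lambda>j. cnj (a (- j)))"

text \<open>integral = constant coefficient\<close>
definition lint :: "(int \<Rightarrow> complex) \<Rightarrow> complex" where
  "lint a = a 0"

text \<open>L2 norm on the unit circle = sqrt of sum of squared moduli of coefficients\<close>
definition lnorm2 :: "(int \<Rightarrow> complex) \<Rightarrow> real" where
  "lnorm2 a = sqrt (\<Sum>j\<in>{j. a j \<noteq> 0}. (cmod (a j))^2)"

end

theory Submission
  imports Defs "HOL-Library.Poly_Mapping"
begin

text \<open>Laurent polynomials form the ring \<open>int \<Rightarrow>\<^sub>0 complex\<close> of finitely supported
  coefficient functions under convolution. On it, tilde is a ring automorphism and bar a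
  conjugate-linear one; both are involutions, they commute, and the squared norm of \<open>p\<close> is the
  real part of the constant coefficient of \<open>p * bar p\<close>. Expanding the two squared norms this
  way and using \<open>z\<^sup>k * bar z\<^sup>k = 1\<close> and \<open>\<sigma>\<^sup>2 = \<tau>\<^sup>2 = 1\<close>, the cross terms cancel and the
  sum becomes \<open>2 (Q + tilde Q) + 2 \<sigma>\<tau> (R + bar R)\<close>, where \<open>Q\<close> collects the two norm
  terms and \<open>R\<close> the two integrands on the right. Tilde fixes and bar conjugates the constant
  coefficient, so taking real parts of constant coefficients gives the identity.\<close>

abbreviation coeffs :: "(int \<Rightarrow>\<^sub>0 complex) \<Rightarrow> int \<Rightarrow> complex" where
  "coeffs \<equiv> Poly_Mapping.lookup"

lemma lpoly_coeffs: "lpoly a \<longleftrightarrow> (\<exists>p. a = coeffs p)"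
proof
  assume "lpoly a"
  then have "a = coeffs (Abs_poly_mapping a)"
    by (simp add: lpoly_def)
  then show "\<exists>p. a = coeffs p" ..
qed (auto simp: lpoly_def)

lemma lmul_coeffs: "lmul (coeffs p) (coeffs q) = coeffs (p * q)"
proof
  fix n
  have "coeffs (p * q) n = Sum_any (\<lambda>l. coeffs p l * Sum_any (\<lambda>r. coeffs q r when n = l + r))"
    by (rule lookup_mult)
  also have "\<dots> = Sum_any (\<lambda>l. coeffs p l * coeffs q (n - l))"
  proof -
    have "(\<lambda>r. coeffs q r when n = l + r) = (\<lambda>r. if r = n - l then coeffs q r else 0)" for l
      by (auto simp: when_def)
    then have "Sum_any (\<lambda>r. coeffs q r when n = l + r) = coeffs q (n - l)" for l
      by (simp only: Sum_any.delta)
    then show ?thesis by simp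
  qed
  also have "\<dots> = (\<Sum>l\<in>{j. coeffs p j \<noteq> 0}. coeffs p l * coeffs q (n - l))"
    by (rule Sum_any.expand_superset) auto
  finally show "lmul (coeffs p) (coeffs q) n = coeffs (p * q) n"
    by (simp add: lmul_def)
qed

lemma lmono_coeffs: "lmono k = coeffs (Poly_Mapping.single k 1)"
  by (auto simp: lmono_def lookup_single when_def)

lemma coeffs_of_int_mult: "coeffs (of_int c * p) j = of_int c * coeffs p j"
  by (simp flip: single_of_int mult_map_scale_conv_mult add: map.rep_eq when_def)

lift_definition pm_bar :: "(int \<Rightarrow>\<^sub>0 complex) \<Rightarrow> (int \<Rightarrow>\<^sub>0 complex)" is lbar
proof -
  fix a :: "int \<Rightarrow> complex"
  assume "finite {j. a j \<noteq> 0}"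
  moreover have "{j. lbar a j \<noteq> 0} = uminus ` {j. a j \<noteq> 0}"
    by (force simp: lbar_def)
  ultimately show "finite {j. lbar a j \<noteq> 0}" by simp
qed

lift_definition pm_tilde :: "(int \<Rightarrow>\<^sub>0 complex) \<Rightarrow> (int \<Rightarrow>\<^sub>0 complex)" is ltilde
  by (erule finite_subset[rotated]) (auto simp: ltilde_def)

lemma pm_bar_add: "pm_bar (p + q) = pm_bar p + pm_bar q"
  by transfer (simp add: lbar_def)

lemma pm_bar_diff: "pm_bar (p - q) = pm_bar p - pm_bar q"
  by transfer (simp add: lbar_def)

lemma pm_bar_pm_bar [simp]: "pm_bar (pm_bar p) = p"
  by transfer (simp add: lbar_def)

lemma pm_bar_of_int [simp]: "pm_bar (of_int c) = of_int c"
  by (rule poly_mapping_eqI) (simp add: pm_bar.rep_eq lbar_def lookup_of_int when_def)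

lemma pm_bar_single: "pm_bar (Poly_Mapping.single k c) = Poly_Mapping.single (- k) (cnj c)"
  by (rule poly_mapping_eqI) (auto simp: pm_bar.rep_eq lbar_def lookup_single when_def)

lemma pm_bar_mult: "pm_bar (p * q) = pm_bar p * pm_bar q"
proof (rule poly_mapping_eqI)
  fix j
  have "coeffs (pm_bar (p * q)) j = (\<Sum>l\<in>{l. coeffs p l \<noteq> 0}. cnj (coeffs p l) * cnj (coeffs q (- j - l)))"
    by (simp add: pm_bar.rep_eq lbar_def lmul_def flip: lmul_coeffs)
  also have "\<dots> = (\<Sum>l\<in>{l. lbar (coeffs p) l \<noteq> 0}. lbar (coeffs p) l * lbar (coeffs q) (j - l))"
    by (rule sum.reindex_bij_witness[of _ uminus uminus]) (auto simp: lbar_def)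
  also have "\<dots> = coeffs (pm_bar p * pm_bar q) j"
    by (simp add: pm_bar.rep_eq lmul_def flip: lmul_coeffs)
  finally show "coeffs (pm_bar (p * q)) j = coeffs (pm_bar p * pm_bar q) j" .
qed

lemma pm_tilde_add: "pm_tilde (p + q) = pm_tilde p + pm_tilde q"
  by transfer (simp add: ltilde_def algebra_simps)

lemma pm_tilde_pm_tilde [simp]: "pm_tilde (pm_tilde p) = p"
  by transfer (simp add: ltilde_def flip: power_int_mult_distrib)

lemma pm_tilde_pm_bar: "pm_tilde (pm_bar p) = pm_bar (pm_tilde p)"
  by transfer (simp add: ltilde_def lbar_def power_int_minus_left fun_eq_iff)

lemma pm_tilde_mult: "pm_tilde (p * q) = pm_tilde p * pm_tilde q"
proof (rule poly_mapping_eqI)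
  fix j
  have "coeffs (pm_tilde (p * q)) j
      = (\<Sum>l\<in>{l. coeffs p l \<noteq> 0}. ((-1) powi l * coeffs p l) * ((-1) powi (j - l) * coeffs q (j - l)))"
    by (simp add: pm_tilde.rep_eq ltilde_def lmul_def sum_distrib_left mult_ac
        flip: lmul_coeffs power_int_add)
  also have "\<dots> = coeffs (pm_tilde p * pm_tilde q) j"
    by (simp add: pm_tilde.rep_eq ltilde_def lmul_def flip: lmul_coeffs)
  finally show "coeffs (pm_tilde (p * q)) j = coeffs (pm_tilde p * pm_tilde q) j" .
qed

lemma coeffs_pm_bar_zero: "coeffs (pm_bar p) 0 = cnj (coeffs p 0)"
  by (simp add: pm_bar.rep_eq lbar_def)

lemma coeffs_pm_tilde_zero: "coeffs (pm_tilde p) 0 = coeffs p 0"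
  by (simp add: pm_tilde.rep_eq ltilde_def)

lemma lnorm2_coeffs_square: "(lnorm2 (coeffs p))\<^sup>2 = Re (coeffs (p * pm_bar p) 0)"
proof -
  have "coeffs (p * pm_bar p) 0 = (\<Sum>l\<in>{l. coeffs p l \<noteq> 0}. coeffs p l * cnj (coeffs p l))"
    by (simp add: pm_bar.rep_eq lbar_def lmul_def flip: lmul_coeffs)
  then have "Re (coeffs (p * pm_bar p) 0) = (\<Sum>l\<in>{l. coeffs p l \<noteq> 0}. (cmod (coeffs p l))\<^sup>2)"
    by (simp add: Re_sum complex_mult_cnj cmod_def)
  then show ?thesis
    by (simp add: lnorm2_def sum_nonneg)
qed

lemma twisted_products_identity:
  fixes A B m s t :: "int \<Rightarrow>\<^sub>0 complex"
  assumes "m * pm_bar m = 1" and "s * s = 1" and "t * t = 1" and "pm_bar s = s" and "pm_bar t = t"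
  defines "X \<equiv> (A + s * (m * pm_bar (pm_tilde A))) * (B + t * (m * pm_bar (pm_tilde B)))"
    and "Y \<equiv> (pm_tilde A - s * (m * pm_bar A)) * (pm_tilde B - t * (m * pm_bar B))"
    and "Q \<equiv> A * B * pm_bar (A * B) + A * pm_tilde B * pm_bar (A * pm_tilde B)"
    and "R \<equiv> A * pm_tilde A * pm_bar (B * pm_tilde B) + pm_bar (m * m) * (A * pm_tilde A * B * pm_tilde B)"
  shows "X * pm_bar X + Y * pm_bar Y
    = (Q + pm_tilde Q) + (Q + pm_tilde Q) + s * t * ((R + pm_bar R) + (R + pm_bar R))"
  unfolding X_def Y_def Q_def R_def
  by (simp only: pm_bar_add pm_bar_diff pm_bar_mult pm_bar_pm_bar pm_tilde_add pm_tilde_mult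
      pm_tilde_pm_tilde pm_tilde_pm_bar assms(4,5)) (use assms(1-3) in algebra)

lemma coeffs_add_twist:
  "(\<lambda>j. coeffs p j + of_int \<sigma> * lmul (lmono k) (lbar (ltilde (coeffs p))) j)
    = coeffs (p + of_int \<sigma> * (Poly_Mapping.single k 1 * pm_bar (pm_tilde p)))"
  by (simp add: fun_eq_iff lookup_add coeffs_of_int_mult lmono_coeffs lmul_coeffs
      flip: pm_tilde.rep_eq pm_bar.rep_eq)

lemma coeffs_diff_twist:
  "(\<lambda>j. ltilde (coeffs p) j - of_int \<sigma> * lmul (lmono k) (lbar (coeffs p)) j)
    = coeffs (pm_tilde p - of_int \<sigma> * (Poly_Mapping.single k 1 * pm_bar p))"
  by (simp add: fun_eq_iff lookup_minus coeffs_of_int_mult lmono_coeffs lmul_coeffs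
      flip: pm_tilde.rep_eq pm_bar.rep_eq)

lemma Re_coeffs_zero_twisted_products:
  fixes A B :: "int \<Rightarrow>\<^sub>0 complex" and k \<sigma> \<tau> :: int
  assumes "\<sigma> \<in> {-1, 1}" and "\<tau> \<in> {-1, 1}"
  defines "m \<equiv> Poly_Mapping.single k 1"
  defines "X \<equiv> (A + of_int \<sigma> * (m * pm_bar (pm_tilde A))) * (B + of_int \<tau> * (m * pm_bar (pm_tilde B)))"
    and "Y \<equiv> (pm_tilde A - of_int \<sigma> * (m * pm_bar A)) * (pm_tilde B - of_int \<tau> * (m * pm_bar B))"
  shows "1/2 * Re (coeffs (X * pm_bar X) 0) + 1/2 * Re (coeffs (Y * pm_bar Y) 0)
    = 2 * Re (coeffs (A * B * pm_bar (A * B)) 0)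
      + 2 * Re (coeffs (A * pm_tilde B * pm_bar (A * pm_tilde B)) 0)
      + 2 * of_int (\<sigma> * \<tau>) * Re (coeffs (A * pm_tilde A * pm_bar (B * pm_tilde B)) 0)
      + 2 * of_int (\<sigma> * \<tau>) * Re (coeffs (Poly_Mapping.single (- 2 * k) 1 * (A * pm_tilde A * B * pm_tilde B)) 0)"
proof -
  define Q where "Q = A * B * pm_bar (A * B) + A * pm_tilde B * pm_bar (A * pm_tilde B)"
  define R where "R = A * pm_tilde A * pm_bar (B * pm_tilde B) + pm_bar (m * m) * (A * pm_tilde A * B * pm_tilde B)"
  have "m * pm_bar m = 1"
    by (simp add: m_def pm_bar_single mult_single)
  moreover have "of_int \<sigma> * of_int \<sigma> = (1 :: int \<Rightarrow>\<^sub>0 complex)" and "of_int \<tau> * of_int \<tau> = (1 :: int \<Rightarrow>\<^sub>0 complex)"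
    using assms(1,2) by (auto simp flip: of_int_mult)
  ultimately have identity: "X * pm_bar X + Y * pm_bar Y
      = (Q + pm_tilde Q) + (Q + pm_tilde Q) + of_int (\<sigma> * \<tau>) * ((R + pm_bar R) + (R + pm_bar R))"
    unfolding X_def Y_def Q_def R_def of_int_mult by (rule twisted_products_identity) simp_all
  have "Re (coeffs (X * pm_bar X) 0) + Re (coeffs (Y * pm_bar Y) 0)
      = Re (coeffs (X * pm_bar X + Y * pm_bar Y) 0)"
    by (simp add: lookup_add)
  also have "\<dots> = 4 * Re (coeffs Q 0) + 4 * of_int (\<sigma> * \<tau>) * Re (coeffs R 0)"
    unfolding identity
    by (simp only: lookup_add coeffs_of_int_mult coeffs_pm_tilde_zero coeffs_pm_bar_zero) simp
  finally have "Re (coeffs (X * pm_bar X) 0) + Re (coeffs (Y * pm_bar Y) 0)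
      = 4 * Re (coeffs Q 0) + 4 * of_int (\<sigma> * \<tau>) * Re (coeffs R 0)" .
  moreover have "pm_bar (m * m) = Poly_Mapping.single (- 2 * k) 1"
    by (simp add: m_def pm_bar_single mult_single)
  ultimately show ?thesis
    by (simp add: Q_def R_def lookup_add algebra_simps)
qed

theorem lemma2p10:
  fixes a b :: "int \<Rightarrow> complex" and k \<sigma> \<tau> :: int
  assumes "lpoly a" and "lpoly b"
    and "\<sigma> \<in> {-1, 1}" and "\<tau> \<in> {-1, 1}"
  shows "1/2 * (lnorm2 (lmul (\<lambda>j. a j + of_int \<sigma> * lmul (lmono k) (lbar (ltilde a)) j)
                            (\<lambda>j. b j + of_int \<tau> * lmul (lmono k) (lbar (ltilde b)) j)))^2
       + 1/2 * (lnorm2 (lmul (\<lambda>j. ltilde a j - of_int \<sigma> * lmul (lmono k) (lbar a) j)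
                            (\<lambda>j. ltilde b j - of_int \<tau> * lmul (lmono k) (lbar b) j)))^2
       = 2 * (lnorm2 (lmul a b))^2 + 2 * (lnorm2 (lmul a (ltilde b)))^2
         + 2 * of_int (\<sigma> * \<tau>) * Re (lint (lmul (lmul a (ltilde a)) (lbar (lmul b (ltilde b)))))
         + 2 * of_int (\<sigma> * \<tau>) * Re (lint (lmul (lmono (-2 * k))
                 (lmul (lmul (lmul a (ltilde a)) b) (ltilde b))))"
proof -
  obtain A B where a: "a = coeffs A" and b: "b = coeffs B"
    using assms(1,2) by (auto simp: lpoly_coeffs)
  show ?thesis
    unfolding a b coeffs_add_twist coeffs_diff_twist
    unfolding lmul_coeffs lnorm2_coeffs_square lint_def lmono_coeffs
      pm_tilde.rep_eq[symmetric] pm_bar.rep_eq[symmetric]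
    using Re_coeffs_zero_twisted_products[OF assms(3,4), where A = A and B = B and k = k]
    by (simp only: mult.assoc)
qed

end
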